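(* Let $\mathcal{R},\mathcal{R}_1,\ldots,\mathcal{R}_s,\mathcal{C},\mathcal{C}_1,\ldots,\mathcal{C}_t$ be partitions of $\{1,\ldots,n\}$ such that $\mathcal{R}$ is finer than each $\mathcal{R}_i$ and $\mathcal{C}$ is finer than each $\mathcal{C}_j$. Then \[ \mathcal{L}(\mathcal{R}_i\times\mathcal{C}:\ 1\le i\le s)\cap\mathcal{L}(\mathcal{R}\times\mathcal{C}_j:\ 1\le j\le t)=\mathcal{L}(\mathcal{R}_i\times\mathcal{C}_j:\ 1\le i\le s,\ 1\le j\le t). \]
   Context: $S_n$ is the group of permutations of $\{1,\ldots,n\}$. A partition $\mathcal{Z}$ is finer than $\mathcal{W}$ if every block of $\mathcal{Z}$ lies in some block of $\mathcal{W}$. For partitions $\mathcal{R}=(R_i)$, $\mathcal{C}=(C_j)$ of $\{1,\ldots,n\}$, the product partition $\mathcal{R}\times\mathcal{C}=(R_i\times C_j)$ of the $n\times n$ board has marginal $|\pi_{\mathcal{R}\times\mathcal{C}}|=(t_{ij})$, $t_{ij}=|\{s:(s,\pi(s))\in R_i\times C_j\}|$, for $\pi\in S_n$. $U^{\mathcal{B}}=\{v\in\mathbb{R}^{S_n}: |\pi_{\mathcal{B}}|=|\sigma_{\mathcal{B}}|\Rightarrow v(\pi)=v(\sigma)\}$. The log-linear model $\mathcal{L}(\mathcal{B}_1,\ldots,\mathcal{B}_m)$ is the set of strictly positive probability distributions $p$ on $S_n$ with $\log p\in\mathrm{Span}(U^{\mathcal{B}_1},\ldots,U^{\mathcal{B}_m})$.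 *)

theory Defs
  imports "HOL-Analysis.Analysis" "HOL-Combinatorics.Combinatorics" "HOL-Library.Disjoint_Sets" "HOL-Library.Function_Algebras"
begin

text \<open>The symmetric group S_n: permutations of {1..n}, as functions nat => nat
  that are the identity outside {1..n}.\<close>
definition Sym :: "nat \<Rightarrow> (nat \<Rightarrow> nat) set" where
  "Sym n = {\<pi>. \<pi> permutes {1..n}}"

definition finer :: "'a set set \<Rightarrow> 'a set set \<Rightarrow> bool" where
  "finer Z W \<longleftrightarrow> (\<forall>A\<in>Z. \<exists>B\<in>W. A \<subseteq> B)"

definition marg_entry :: "nat \<Rightarrow> (nat \<Rightarrow> nat) \<Rightarrow> nat set \<Rightarrow> nat set \<Rightarrow> nat" where
  "marg_entry n \<pi> A B = card {s \<in> {1..n}. s \<in> A \<and> \<pi> s \<in> B}"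

definition marginal :: "nat \<Rightarrow> nat set set \<times> nat set set \<Rightarrow> (nat \<Rightarrow> nat) \<Rightarrow> (nat set \<times> nat set \<Rightarrow> nat)" where
  "marginal n RC \<pi> = (\<lambda>(A, B). if A \<in> fst RC \<and> B \<in> snd RC then marg_entry n \<pi> A B else 0)"

text \<open>Vectors in R^{S_n} are functions on S_n; we represent them as functions
  (nat => nat) => real that vanish outside S_n.\<close>
definition vecs :: "nat \<Rightarrow> ((nat \<Rightarrow> nat) \<Rightarrow> real) set" where
  "vecs n = {v. \<forall>\<pi>. \<pi> \<notin> Sym n \<longrightarrow> v \<pi> = 0}"

definition U :: "nat \<Rightarrow> nat set set \<times> nat set set \<Rightarrow> ((nat \<Rightarrow> nat) \<Rightarrow> real) set" where
  "U n RC = {v \<in> vecs n. \<forall>\<pi>\<in>Sym n. \<forall>\<sigma>\<in>Sym n.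
              marginal n RC \<pi> = marginal n RC \<sigma> \<longrightarrow> v \<pi> = v \<sigma>}"

definition fscale :: "real \<Rightarrow> ((nat \<Rightarrow> nat) \<Rightarrow> real) \<Rightarrow> ((nat \<Rightarrow> nat) \<Rightarrow> real)" where
  "fscale r v = (\<lambda>x. r * v x)"

abbreviation fspan :: "((nat \<Rightarrow> nat) \<Rightarrow> real) set \<Rightarrow> ((nat \<Rightarrow> nat) \<Rightarrow> real) set" where
  "fspan \<equiv> module.span fscale"

definition loglin :: "nat \<Rightarrow> (nat set set \<times> nat set set) set \<Rightarrow> ((nat \<Rightarrow> nat) \<Rightarrow> real) set" where
  "loglin n F = {p. (\<forall>\<pi>\<in>Sym n. p \<pi> > 0) \<and> (\<forall>\<pi>. \<pi> \<notin> Sym n \<longrightarrow> p \<pi> = 0)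
      \<and> (\<Sum>\<pi>\<in>Sym n. p \<pi>) = 1
      \<and> (\<lambda>\<pi>. if \<pi> \<in> Sym n then ln (p \<pi>) else 0) \<in> fspan (\<Union>B\<in>F. U n B)}"

end

theory Submission
  imports Defs
begin

(* For partitions A, B of {1..n} let H_A, H_B be their block stabilisers in S_n.
   Two permutations have the same (A x B)-marginal iff they lie in the same double coset
   H_B pi H_A, so U^(A x B) is the space of vectors on S_n that are invariant under H_B acting
   from the left and under H_A acting from the right.

   Since R refines every R_i and C refines every C_j, H_C is contained in H_(C_j) and H_R in
   H_(R_i), which gives U^(R_i x C_j) <= U^(R_i x C) and U^(R_i x C_j) <= U^(R x C_j), hence
   the inclusion of the right-hand side in the intersection.  For the converse, the span X of
   the right H_(R_i)-invariant vectors is stable under left translation by S_n, so it has an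
   S_n-equivariant linear projection P (an averaged projection); applying P to a vector in the
   span of the U^(R x C_j) and then averaging over H_(C_j) from the left exhibits it in the
   span of the U^(R_i x C_j).  The statement about log-linear models is then immediate, since
   the models are defined by the spans alone. *)

interpretation FV: vector_space fscale
  by unfold_locales (auto simp: fscale_def algebra_simps)

interpretation FVP: vector_space_pair fscale fscale ..

definition perm_group :: "('a \<Rightarrow> 'a) set \<Rightarrow> bool" where
  "perm_group G \<longleftrightarrow> id \<in> G \<and> (\<forall>g\<in>G. bij g \<and> inv g \<in> G) \<and> (\<forall>g\<in>G. \<forall>h\<in>G. g \<circ> h \<in> G)"

lemma perm_groupD:
  assumes "perm_group G"
  shows perm_group_id: "id \<in> G"
    and perm_group_bij: "\<And>g. g \<in> G \<Longrightarrow> bij g"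
    and perm_group_inv: "\<And>g. g \<in> G \<Longrightarrow> inv g \<in> G"
    and perm_group_comp: "\<And>g h. g \<in> G \<Longrightarrow> h \<in> G \<Longrightarrow> g \<circ> h \<in> G"
  using assms unfolding perm_group_def by blast+

lemma perm_group_inv_cancel:
  assumes "perm_group G" "g \<in> G"
  shows "g \<circ> inv g = id" "inv g \<circ> g = id"
  using perm_group_bij[OF assms]
  by (simp_all add: bij_is_surj bij_is_inj surj_iff[symmetric] inj_iff[symmetric])

lemma perm_group_comp_iff:
  assumes G: "perm_group G" and g: "g \<in> G"
  shows "g \<circ> \<pi> \<in> G \<longleftrightarrow> \<pi> \<in> G" and "\<pi> \<circ> g \<in> G \<longleftrightarrow> \<pi> \<in> G"
proof -
  have "\<pi> = inv g \<circ> (g \<circ> \<pi>)" "\<pi> = (\<pi> \<circ> g) \<circ> inv g"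
    using perm_group_inv_cancel[OF G g] by (simp_all add: comp_assoc[symmetric] comp_assoc)
  then show "g \<circ> \<pi> \<in> G \<longleftrightarrow> \<pi> \<in> G" and "\<pi> \<circ> g \<in> G \<longleftrightarrow> \<pi> \<in> G"
    using perm_group_comp[OF G] perm_group_inv[OF G g] g by metis+
qed

lemma perm_group_sum_left:
  assumes G: "perm_group G" and h: "h \<in> G"
  shows "(\<Sum>g\<in>G. f (h \<circ> g)) = (\<Sum>g\<in>G. f g)"
proof (rule sum.reindex_bij_witness[where i="\<lambda>g. inv h \<circ> g" and j="\<lambda>g. h \<circ> g"])
  fix g assume "g \<in> G"
  show "inv h \<circ> (h \<circ> g) = g" "h \<circ> (inv h \<circ> g) = g"
    using perm_group_inv_cancel[OF G h] by (simp_all add: comp_assoc[symmetric])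
  show "inv h \<circ> g \<in> G" "h \<circ> g \<in> G"
    using perm_group_comp[OF G] perm_group_inv[OF G h] h \<open>g \<in> G\<close> by blast+
qed simp

lemma perm_group_sum_right:
  assumes G: "perm_group G" and h: "h \<in> G"
  shows "(\<Sum>g\<in>G. f (g \<circ> h)) = (\<Sum>g\<in>G. f g)"
proof (rule sum.reindex_bij_witness[where i="\<lambda>g. g \<circ> inv h" and j="\<lambda>g. g \<circ> h"])
  fix g assume "g \<in> G"
  show "g \<circ> h \<circ> inv h = g" "g \<circ> inv h \<circ> h = g"
    using perm_group_inv_cancel[OF G h] by (simp_all add: comp_assoc)
  show "g \<circ> inv h \<in> G" "g \<circ> h \<in> G"
    using perm_group_comp[OF G] perm_group_inv[OF G h] h \<open>g \<in> G\<close> by blast+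
qed simp

lemma perm_group_Sym: "perm_group (Sym n)"
  unfolding perm_group_def Sym_def
  by (auto simp: permutes_id permutes_inv permutes_compose permutes_bij)

lemma finite_Sym: "finite (Sym n)"
  unfolding Sym_def by (rule finite_permutations) simp

lemma Sym_in_range: "\<pi> \<in> Sym n \<Longrightarrow> \<pi> s \<in> {1..n} \<longleftrightarrow> s \<in> {1..n}"
  using permutes_in_image[of \<pi> "{1..n}" s] unfolding Sym_def by blast

lemma Sym_outside: "\<pi> \<in> Sym n \<Longrightarrow> s \<notin> {1..n} \<Longrightarrow> \<pi> s = s"
  using permutes_not_in[of \<pi> "{1..n}" s] unfolding Sym_def by blast

(* The space U^(A x B) turns out to consist of the vectors invariant under H_B from the
   left and under H_A from the right. *)
definition stab :: "nat \<Rightarrow> nat set set \<Rightarrow> (nat \<Rightarrow> nat) set" where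
  "stab n P = {g \<in> Sym n. \<forall>b\<in>P. \<forall>x. g x \<in> b \<longleftrightarrow> x \<in> b}"

lemma stab_subset_Sym: "stab n P \<subseteq> Sym n"
  unfolding stab_def by blast

lemma perm_group_stab: "perm_group (stab n P)"
proof -
  have "inv g \<in> stab n P" if g: "g \<in> stab n P" for g
  proof -
    have gS: "g \<in> Sym n" using g stab_subset_Sym by blast
    have "inv g x \<in> b \<longleftrightarrow> x \<in> b" if "b \<in> P" for b x
    proof -
      have "g (inv g x) = x" using perm_group_inv_cancel(1)[OF perm_group_Sym gS] by (metis comp_apply id_apply)
      moreover have "g (inv g x) \<in> b \<longleftrightarrow> inv g x \<in> b" using g \<open>b \<in> P\<close> unfolding stab_def by blast
      ultimately show ?thesis by simp
    qed
    then show ?thesis using perm_group_inv[OF perm_group_Sym gS] unfolding stab_def by blast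
  qed
  moreover have "g \<circ> h \<in> stab n P" if "g \<in> stab n P" "h \<in> stab n P" for g h
    using that perm_group_comp[OF perm_group_Sym] unfolding stab_def by auto
  moreover have "id \<in> stab n P"
    using perm_group_id[OF perm_group_Sym] unfolding stab_def by auto
  ultimately show ?thesis
    using perm_group_bij[OF perm_group_Sym] stab_subset_Sym unfolding perm_group_def by blast
qed

lemma partition_block_unique:
  "partition_on S P \<Longrightarrow> b \<in> P \<Longrightarrow> b' \<in> P \<Longrightarrow> x \<in> b \<Longrightarrow> x \<in> b' \<Longrightarrow> b = b'"
  using partition_onD2 disjointD by blast

lemma stab_finer:
  assumes C: "partition_on {1..n} C" and C': "partition_on {1..n} C'" and "finer C C'"
  shows "stab n C \<subseteq> stab n C'"
proof
  fix g assume g: "g \<in> stab n C"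
  have "g x \<in> b' \<longleftrightarrow> x \<in> b'" if b': "b' \<in> C'" for b' x
  proof (cases "x \<in> {1..n}")
    case True
    then obtain a where a: "a \<in> C" "x \<in> a" using partition_onD1[OF C] by blast
    then obtain b where b: "b \<in> C'" "a \<subseteq> b" using \<open>finer C C'\<close> unfolding finer_def by blast
    have "g x \<in> a" using g a unfolding stab_def by blast
    then show ?thesis using partition_block_unique[OF C' b' b(1)] a b by blast
  next
    case False
    then show ?thesis using Sym_outside[OF subsetD[OF stab_subset_Sym g] False] by simp
  qed
  then show "g \<in> stab n C'" using g unfolding stab_def by blast
qed

definition incident :: "'a set set \<Rightarrow> 'a \<Rightarrow> 'a set set" where
  "incident P x = {b \<in> P. x \<in> b}"

lemma incident_partition:
  assumes P: "partition_on S P" and "x \<in> S"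
  shows "incident P x = {b} \<longleftrightarrow> b \<in> P \<and> x \<in> b"
  using partition_block_unique[OF P] unfolding incident_def by blast

lemma incident_partition_singleton:
  assumes P: "partition_on S P" and x: "x \<in> S"
  obtains b where "b \<in> P" "incident P x = {b}"
  using partition_onD1[OF P] x incident_partition[OF P x] by blast

lemma bij_betw_fibres:
  assumes "finite S" "finite T" and fib: "\<And>k. card {s\<in>S. f s = k} = card {t\<in>T. g t = k}"
  obtains h where "bij_betw h S T" "\<And>s. s \<in> S \<Longrightarrow> g (h s) = f s"
proof -
  have "\<exists>hk. bij_betw hk {s\<in>S. f s = k} {t\<in>T. g t = k}" for k
    using finite_same_card_bij[OF _ _ fib[of k]] assms(1,2) by auto
  then obtain hk where hk: "\<And>k. bij_betw (hk k) {s\<in>S. f s = k} {t\<in>T. g t = k}" by metis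
  define h where "h s = hk (f s) s" for s
  have h_fibre: "h s \<in> T \<and> g (h s) = f s" if "s \<in> S" for s
    using bij_betwE[OF hk[of "f s"]] that unfolding h_def by blast
  have "inj_on h S"
  proof (rule inj_onI)
    fix s s' assume s: "s \<in> S" "s' \<in> S" and eq: "h s = h s'"
    then have "f s = f s'" using h_fibre by metis
    then show "s = s'"
      using eq s bij_betw_imp_inj_on[OF hk[of "f s"]] unfolding h_def inj_on_def by auto
  qed
  moreover have "T \<subseteq> h ` S"
  proof
    fix t assume "t \<in> T"
    then have "t \<in> hk (g t) ` {s\<in>S. f s = g t}"
      using bij_betw_imp_surj_on[OF hk[of "g t"]] by blast
    then show "t \<in> h ` S" unfolding h_def by force
  qed
  ultimately show ?thesis using that h_fibre unfolding bij_betw_def by blast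
qed

lemma marginal_fibre:
  assumes A: "partition_on {1..n} A" and B: "partition_on {1..n} B" and \<pi>: "\<pi> \<in> Sym n"
    and "a \<in> A" "b \<in> B"
  shows "{s\<in>{1..n}. (incident A s, incident B (\<pi> s)) = ({a}, {b})} = {s\<in>{1..n}. s \<in> a \<and> \<pi> s \<in> b}"
proof -
  have fibre: "(incident A s, incident B (\<pi> s)) = ({a}, {b}) \<longleftrightarrow> s \<in> a \<and> \<pi> s \<in> b"
    if s: "s \<in> {1..n}" for s
  proof -
    have "incident A s = {a} \<longleftrightarrow> s \<in> a"
      using incident_partition[OF A s, of a] \<open>a \<in> A\<close> by (simp only: simp_thms)
    moreover have "incident B (\<pi> s) = {b} \<longleftrightarrow> \<pi> s \<in> b"
      using incident_partition[OF B Sym_in_range[OF \<pi>, THEN iffD2, OF s], of b] \<open>b \<in> B\<close>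
      by (simp only: simp_thms)
    ultimately show ?thesis by (simp only: prod.inject)
  qed
  show ?thesis by (rule Collect_cong, rule conj_cong, rule refl, erule fibre)
qed

lemma marginal_fibre_empty:
  assumes A: "partition_on {1..n} A" and B: "partition_on {1..n} B" and \<pi>: "\<pi> \<in> Sym n"
    and k: "\<nexists>a b. a \<in> A \<and> b \<in> B \<and> k = ({a}, {b})"
  shows "{s\<in>{1..n}. (incident A s, incident B (\<pi> s)) = k} = {}"
proof -
  have "(incident A s, incident B (\<pi> s)) \<noteq> k" if s: "s \<in> {1..n}" for s
  proof -
    have "\<pi> s \<in> {1..n}" using Sym_in_range[OF \<pi>] s by blast
    obtain a where "a \<in> A" "incident A s = {a}" using incident_partition_singleton[OF A s] .
    moreover obtain b where "b \<in> B" "incident B (\<pi> s) = {b}"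
      using incident_partition_singleton[OF B \<open>\<pi> s \<in> {1..n}\<close>] .
    ultimately show ?thesis using k by auto
  qed
  then show ?thesis by (simp only: Collect_empty_eq) blast
qed

lemma marginal_left:
  assumes "c \<in> stab n B"
  shows "marginal n (A, B) (c \<circ> \<pi>) = marginal n (A, B) \<pi>"
  using assms unfolding marginal_def marg_entry_def stab_def by (auto simp: fun_eq_iff)

lemma marginal_right:
  assumes r: "r \<in> stab n A"
  shows "marginal n (A, B) (\<pi> \<circ> r) = marginal n (A, B) \<pi>"
proof -
  have rp: "r permutes {1..n}" using r stab_subset_Sym unfolding Sym_def by blast
  have "marg_entry n (\<pi> \<circ> r) a b = marg_entry n \<pi> a b" if a: "a \<in> A" for a b
  proof -
    define Y where "Y = {u\<in>{1..n}. u \<in> a \<and> \<pi> u \<in> b}"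
    have "{s\<in>{1..n}. s \<in> a \<and> (\<pi> \<circ> r) s \<in> b} = r -` Y"
      using r a permutes_in_image[OF rp] unfolding stab_def Y_def by auto
    moreover have "card (r -` Y) = card Y"
      using card_vimage_inj[OF permutes_inj[OF rp]] permutes_surj[OF rp] by simp
    ultimately show ?thesis unfolding marg_entry_def Y_def by simp
  qed
  then show ?thesis unfolding marginal_def by (auto simp: fun_eq_iff)
qed

(* Conversely, permutations with equal marginals lie in the same double coset H_B pi H_A:
   a bijection matching the classes above gives r in H_A, and c is then forced. *)
lemma marginal_eq_double_coset:
  assumes A: "partition_on {1..n} A" and B: "partition_on {1..n} B"
    and \<pi>: "\<pi> \<in> Sym n" and \<sigma>: "\<sigma> \<in> Sym n"
    and eq: "marginal n (A, B) \<pi> = marginal n (A, B) \<sigma>"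
  obtains c r where "c \<in> stab n B" "r \<in> stab n A" "\<sigma> = c \<circ> \<pi> \<circ> r"
proof -
  define key where "key \<tau> s = (incident A s, incident B (\<tau> s))" for \<tau> :: "nat \<Rightarrow> nat" and s
  have "card {s\<in>{1..n}. key \<sigma> s = k} = card {s\<in>{1..n}. key \<pi> s = k}" for k
  proof (cases "\<exists>a b. a \<in> A \<and> b \<in> B \<and> k = ({a}, {b})")
    case True
    then obtain a b where ab: "a \<in> A" "b \<in> B" "k = ({a}, {b})" by blast
    have "marg_entry n \<pi> a b = marg_entry n \<sigma> a b"
      using fun_cong[OF eq, of "(a, b)"] ab unfolding marginal_def by simp
    then show ?thesis
      using marginal_fibre[OF A B \<pi> ab(1,2)] marginal_fibre[OF A B \<sigma> ab(1,2)] ab(3)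
      unfolding key_def marg_entry_def by simp
  next
    case False
    then have "{s\<in>{1..n}. key \<sigma> s = k} = {}" "{s\<in>{1..n}. key \<pi> s = k} = {}"
      using marginal_fibre_empty[OF A B \<sigma> False] marginal_fibre_empty[OF A B \<pi> False]
      unfolding key_def by blast+
    then show ?thesis by (simp only:)
  qed
  then obtain h where h: "bij_betw h {1..n} {1..n}" "\<And>s. s \<in> {1..n} \<Longrightarrow> key \<pi> (h s) = key \<sigma> s"
    using bij_betw_fibres[of "{1..n}" "{1..n}" "key \<sigma>" "key \<pi>"] by auto
  define r where "r s = (if s \<in> {1..n} then h s else s)" for s
  have r_outside: "r s = s" if "s \<notin> {1..n}" for s
    using that unfolding r_def by auto
  have r_perm: "r permutes {1..n}"
  proof (rule bij_imp_permutes[OF _ r_outside])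
    show "bij_betw r {1..n} {1..n}" using h(1) by (rule bij_betw_cong[THEN iffD1, rotated]) (simp add: r_def)
  qed
  have r_key: "incident A (r s) = incident A s \<and> incident B (\<pi> (r s)) = incident B (\<sigma> s)"
    if s: "s \<in> {1..n}" for s
    using h(2)[OF that] that unfolding r_def key_def by simp
  have "r \<in> stab n A"
  proof -
    have "r x \<in> a \<longleftrightarrow> x \<in> a" if "a \<in> A" for a x
    proof (cases "x \<in> {1..n}")
      case True
      have "a \<in> incident A (r x) \<longleftrightarrow> a \<in> incident A x" using r_key[OF True] by simp
      then show ?thesis using \<open>a \<in> A\<close> unfolding incident_def by simp
    qed (simp add: r_outside)
    then show ?thesis using r_perm unfolding stab_def Sym_def by blast
  qed
  moreover
  define c where "c = \<sigma> \<circ> inv (\<pi> \<circ> r)"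
  have \<pi>r: "\<pi> \<circ> r permutes {1..n}" using permutes_compose[OF r_perm] \<pi> unfolding Sym_def by blast
  have "\<sigma> = c \<circ> \<pi> \<circ> r"
    unfolding c_def using permutes_inv_o(2)[OF \<pi>r] by (simp add: comp_assoc)
  moreover have "c \<in> stab n B"
  proof -
    have "c x \<in> b \<longleftrightarrow> x \<in> b" if "b \<in> B" for b x
    proof -
      define y where "y = inv (\<pi> \<circ> r) x"
      have x: "x = \<pi> (r y)" unfolding y_def using permutes_inverses(1)[OF \<pi>r] by simp
      have cx: "c x = \<sigma> y" unfolding c_def y_def by simp
      show ?thesis
      proof (cases "y \<in> {1..n}")
        case True
        have "b \<in> incident B (\<pi> (r y)) \<longleftrightarrow> b \<in> incident B (\<sigma> y)" using r_key[OF True] by simp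
        then show ?thesis using \<open>b \<in> B\<close> cx x unfolding incident_def by simp
      next
        case False
        then have "r y = y" "\<pi> y = y" "\<sigma> y = y"
          using r_outside Sym_outside[OF \<pi>] Sym_outside[OF \<sigma>] by blast+
        then show ?thesis using cx x by simp
      qed
    qed
    moreover have "c permutes {1..n}"
      unfolding c_def using permutes_compose[OF permutes_inv[OF \<pi>r]] \<sigma> unfolding Sym_def by blast
    ultimately show ?thesis unfolding stab_def Sym_def by blast
  qed
  ultimately show ?thesis using that by blast
qed

type_synonym vec = "(nat \<Rightarrow> nat) \<Rightarrow> real"

definition ltr :: "(nat \<Rightarrow> nat) \<Rightarrow> vec \<Rightarrow> vec" where
  "ltr g v = (\<lambda>\<pi>. v (g \<circ> \<pi>))"

definition rtr :: "(nat \<Rightarrow> nat) \<Rightarrow> vec \<Rightarrow> vec" where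
  "rtr g v = (\<lambda>\<pi>. v (\<pi> \<circ> g))"

definition linv :: "nat \<Rightarrow> (nat \<Rightarrow> nat) set \<Rightarrow> vec set" where
  "linv n H = {v \<in> vecs n. \<forall>c\<in>H. ltr c v = v}"

definition rinv :: "nat \<Rightarrow> (nat \<Rightarrow> nat) set \<Rightarrow> vec set" where
  "rinv n H = {v \<in> vecs n. \<forall>r\<in>H. rtr r v = v}"

lemma vecs_ltr_eqI:
  assumes v: "v \<in> vecs n" and g: "g \<in> Sym n" and inv: "\<And>\<pi>. \<pi> \<in> Sym n \<Longrightarrow> v (g \<circ> \<pi>) = v \<pi>"
  shows "ltr g v = v"
proof
  fix \<pi>
  show "ltr g v \<pi> = v \<pi>"
    using inv[of \<pi>] v perm_group_comp_iff(1)[OF perm_group_Sym g, of \<pi>] unfolding ltr_def vecs_def by auto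
qed

lemma vecs_rtr_eqI:
  assumes v: "v \<in> vecs n" and g: "g \<in> Sym n" and inv: "\<And>\<pi>. \<pi> \<in> Sym n \<Longrightarrow> v (\<pi> \<circ> g) = v \<pi>"
  shows "rtr g v = v"
proof
  fix \<pi>
  show "rtr g v \<pi> = v \<pi>"
    using inv[of \<pi>] v perm_group_comp_iff(2)[OF perm_group_Sym g, of \<pi>] unfolding rtr_def vecs_def by auto
qed

lemma U_subset_invariants: "U n (A, B) \<subseteq> linv n (stab n B) \<inter> rinv n (stab n A)"
proof
  fix v assume v: "v \<in> U n (A, B)"
  then have vv: "v \<in> vecs n" unfolding U_def by blast
  have "ltr c v = v" if c: "c \<in> stab n B" for c
  proof (rule vecs_ltr_eqI[OF vv])
    show cS: "c \<in> Sym n" using c stab_subset_Sym by blast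
    fix \<pi> assume "\<pi> \<in> Sym n"
    then show "v (c \<circ> \<pi>) = v \<pi>"
      using v marginal_left[OF c] perm_group_comp[OF perm_group_Sym cS] unfolding U_def by blast
  qed
  moreover have "rtr r v = v" if r: "r \<in> stab n A" for r
  proof (rule vecs_rtr_eqI[OF vv])
    show rS: "r \<in> Sym n" using r stab_subset_Sym by blast
    fix \<pi> assume "\<pi> \<in> Sym n"
    then show "v (\<pi> \<circ> r) = v \<pi>"
      using v marginal_right[OF r] perm_group_comp[OF perm_group_Sym _ rS] unfolding U_def by blast
  qed
  ultimately show "v \<in> linv n (stab n B) \<inter> rinv n (stab n A)"
    using vv unfolding linv_def rinv_def by blast
qed

lemma invariants_subset_U:
  assumes A: "partition_on {1..n} A" and B: "partition_on {1..n} B"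
  shows "linv n (stab n B) \<inter> rinv n (stab n A) \<subseteq> U n (A, B)"
proof
  fix v assume v: "v \<in> linv n (stab n B) \<inter> rinv n (stab n A)"
  have same_value: "v \<pi> = v \<sigma>"
    if marg: "\<pi> \<in> Sym n" "\<sigma> \<in> Sym n" "marginal n (A, B) \<pi> = marginal n (A, B) \<sigma>" for \<pi> \<sigma>
  proof -
    obtain c r where "c \<in> stab n B" "r \<in> stab n A" "\<sigma> = c \<circ> \<pi> \<circ> r"
      using marginal_eq_double_coset[OF A B marg] .
    then have "v \<sigma> = ltr c (rtr r v) \<pi>" unfolding ltr_def rtr_def by (simp add: comp_assoc)
    then show ?thesis
      using v \<open>c \<in> stab n B\<close> \<open>r \<in> stab n A\<close> unfolding linv_def rinv_def by simp
  qed
  moreover have "v \<in> vecs n" using v unfolding linv_def by blast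
  ultimately show "v \<in> U n (A, B)" unfolding U_def by blast
qed

lemma U_eq_invariants:
  assumes "partition_on {1..n} A" and "partition_on {1..n} B"
  shows "U n (A, B) = linv n (stab n B) \<inter> rinv n (stab n A)"
  using U_subset_invariants invariants_subset_U[OF assms] by blast

lemma sum_apply_fun: "(\<Sum>g\<in>A. F g) x = (\<Sum>g\<in>A. F g x)"
  by (induction A rule: infinite_finite_induct) auto

lemma flinearI:
  assumes "\<And>x y. f (x + y) = f x + f y" and "\<And>c x. f (fscale c x) = fscale c (f x)"
  shows "Vector_Spaces.linear fscale fscale f"
  using assms FV.vector_space_axioms unfolding Vector_Spaces.linear_iff by blast

lemma flinearD:
  assumes "Vector_Spaces.linear fscale fscale f"
  shows "f (x + y) = f x + f y" and "f (fscale c x) = fscale c (f x)"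
  using assms unfolding Vector_Spaces.linear_iff by blast+

lemma span_map:
  assumes f: "Vector_Spaces.linear fscale fscale f" and S: "f ` S \<subseteq> FV.span T"
  shows "f ` FV.span S \<subseteq> FV.span T"
proof -
  interpret Vector_Spaces.linear fscale fscale f by (rule f)
  have "f ` FV.span S = FV.span (f ` S)" by (rule span_image[symmetric])
  also have "\<dots> \<subseteq> FV.span T" using FV.span_mono[OF S] by (simp only: FV.span_span)
  finally show ?thesis .
qed

lemma linear_ltr: "Vector_Spaces.linear fscale fscale (ltr g)"
  by (rule flinearI) (simp_all add: ltr_def fscale_def fun_eq_iff)

lemma ltr_ltr: "ltr g (ltr h v) = ltr (h \<circ> g) v"
  by (simp add: ltr_def comp_assoc)

lemma ltr_id: "ltr id v = v"
  by (simp add: ltr_def)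

lemma ltr_sum: "ltr g (\<Sum>k\<in>A. F k) = (\<Sum>k\<in>A. ltr g (F k))"
  by (simp add: ltr_def fun_eq_iff sum_apply_fun)

lemma ltr_vecs: "g \<in> Sym n \<Longrightarrow> v \<in> vecs n \<Longrightarrow> ltr g v \<in> vecs n"
  using perm_group_comp_iff(1)[OF perm_group_Sym] unfolding ltr_def vecs_def by blast

lemma ltr_rtr: "ltr g (rtr r v) = rtr r (ltr g v)"
  by (simp add: ltr_def rtr_def comp_assoc)

lemma rinv_ltr: "g \<in> Sym n \<Longrightarrow> v \<in> rinv n H \<Longrightarrow> ltr g v \<in> rinv n H"
  using ltr_vecs unfolding rinv_def by (auto simp: ltr_rtr[symmetric])

lemma linv_antimono: "H \<subseteq> H' \<Longrightarrow> linv n H' \<subseteq> linv n H"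
  unfolding linv_def by blast

lemma rinv_antimono: "H \<subseteq> H' \<Longrightarrow> rinv n H' \<subseteq> rinv n H"
  unfolding rinv_def by blast

definition avg :: "(nat \<Rightarrow> nat) set \<Rightarrow> vec \<Rightarrow> vec" where
  "avg G v = (\<lambda>\<pi>. (\<Sum>c\<in>G. v (c \<circ> \<pi>)) / real (card G))"

lemma linear_avg: "Vector_Spaces.linear fscale fscale (avg G)"
  by (rule flinearI)
    (simp_all add: avg_def fscale_def fun_eq_iff sum.distrib sum_distrib_left add_divide_distrib)

lemma avg_fixed:
  assumes "finite G" "G \<noteq> {}" and fixed: "\<And>c. c \<in> G \<Longrightarrow> ltr c w = w"
  shows "avg G w = w"
proof
  fix \<pi>
  have "w (c \<circ> \<pi>) = w \<pi>" if "c \<in> G" for c using fun_cong[OF fixed[OF that], of \<pi>] by (simp add: ltr_def)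
  then show "avg G w \<pi> = w \<pi>" using assms(1,2) by (simp add: avg_def)
qed

lemma ltr_avg:
  assumes "perm_group G" "c \<in> G"
  shows "ltr c (avg G v) = avg G v"
proof
  fix \<pi>
  have "(\<Sum>d\<in>G. v (d \<circ> (c \<circ> \<pi>))) = (\<Sum>d\<in>G. v (d \<circ> \<pi>))"
    using perm_group_sum_right[OF assms, of "\<lambda>d. v (d \<circ> \<pi>)"] by (simp add: comp_assoc)
  then show "ltr c (avg G v) \<pi> = avg G v \<pi>" by (simp add: ltr_def avg_def)
qed

lemma avg_rtr: "avg G (rtr r v) = rtr r (avg G v)"
  by (simp add: avg_def rtr_def comp_assoc)

lemma avg_rinv:
  assumes G: "perm_group G" "G \<subseteq> Sym n" and v: "v \<in> rinv n H"
  shows "avg G v \<in> rinv n H \<inter> linv n G"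
proof -
  have "avg G v \<pi> = 0" if "\<pi> \<notin> Sym n" for \<pi>
  proof -
    have "v (c \<circ> \<pi>) = 0" if "c \<in> G" for c
      using v \<open>\<pi> \<notin> Sym n\<close> \<open>c \<in> G\<close> G(2) perm_group_comp_iff(1)[OF perm_group_Sym]
      unfolding rinv_def vecs_def by blast
    then show ?thesis by (simp add: avg_def)
  qed
  then have "avg G v \<in> vecs n" unfolding vecs_def by blast
  moreover have "rtr r (avg G v) = avg G v" if "r \<in> H" for r
    using v that unfolding rinv_def by (simp add: avg_rtr[symmetric])
  ultimately show ?thesis using ltr_avg[OF G(1)] unfolding rinv_def linv_def by blast
qed

(* Every subspace X stable under the left action of a finite permutation group G admits a
   G-equivariant linear projection: average an arbitrary linear projection onto X over G. *)
lemma equivariant_projection: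
  assumes G: "perm_group G" "finite G" and X: "FV.subspace X"
    and X_ltr: "\<And>g x. g \<in> G \<Longrightarrow> x \<in> X \<Longrightarrow> ltr g x \<in> X"
  obtains P where "Vector_Spaces.linear fscale fscale P" "\<And>v. P v \<in> X" "\<And>x. x \<in> X \<Longrightarrow> P x = x"
    "\<And>h v. h \<in> G \<Longrightarrow> P (ltr h v) = ltr h (P v)"
proof -
  obtain P0 where P0: "range P0 \<subseteq> X" "Vector_Spaces.linear fscale fscale P0" "\<And>x. x \<in> X \<Longrightarrow> P0 x = x"
    using FVP.linear_exists_left_inverse_on[OF FV.linear_id X] by auto
  define N where "N = real (card G)"
  have N: "N > 0" using G perm_group_id[OF G(1)] unfolding N_def by (auto simp: card_gt_0_iff)
  define P where "P v = fscale (1 / N) (\<Sum>g\<in>G. ltr (inv g) (P0 (ltr g v)))" for v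
  have "Vector_Spaces.linear fscale fscale P"
    by (rule flinearI) (simp_all add: P_def flinearD[OF P0(2)] flinearD[OF linear_ltr]
        sum.distrib FV.scale_right_distrib FV.scale_sum_right FV.scale_scale mult.commute)
  moreover have "P v \<in> X" for v
    unfolding P_def
    using P0(1) X_ltr perm_group_inv[OF G(1)] by (intro FV.subspace_scale[OF X] FV.subspace_sum[OF X]) blast
  moreover have "P x = x" if x: "x \<in> X" for x
  proof -
    have "ltr (inv g) (P0 (ltr g x)) = x" if "g \<in> G" for g
      using P0(3)[OF X_ltr[OF that x]] perm_group_inv_cancel(1)[OF G(1) that] by (simp add: ltr_ltr ltr_id)
    then have "(\<Sum>g\<in>G. ltr (inv g) (P0 (ltr g x))) = fscale N x"
      by (simp add: N_def fscale_def fun_eq_iff sum_apply_fun)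
    then show ?thesis using N unfolding P_def by (simp add: FV.scale_scale)
  qed
  moreover have "P (ltr h v) = ltr h (P v)" if h: "h \<in> G" for h v
  proof -
    have "ltr (inv g) (P0 (ltr g (ltr h v))) = ltr h (ltr (inv (h \<circ> g)) (P0 (ltr (h \<circ> g) v)))"
      if "g \<in> G" for g
    proof -
      have "inv (h \<circ> g) \<circ> h = inv g"
        using o_inv_distrib[OF perm_group_bij[OF G(1) h] perm_group_bij[OF G(1) that]]
          perm_group_inv_cancel(2)[OF G(1) h] by (simp add: comp_assoc)
      then show ?thesis by (simp add: ltr_ltr)
    qed
    then have "(\<Sum>g\<in>G. ltr (inv g) (P0 (ltr g (ltr h v))))
        = (\<Sum>g\<in>G. ltr h (ltr (inv (h \<circ> g)) (P0 (ltr (h \<circ> g) v))))"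
      by (rule sum.cong[OF refl])
    also have "\<dots> = (\<Sum>g\<in>G. ltr h (ltr (inv g) (P0 (ltr g v))))"
      by (rule perm_group_sum_left[OF G(1) h])
    finally show ?thesis unfolding P_def by (simp add: ltr_sum flinearD[OF linear_ltr])
  qed
  ultimately show ?thesis using that by blast
qed

(* Let X be spanned by right H_i-invariants.  With the S_n-equivariant
   projection P onto X, a vector v of X in the span of left K_j-invariants u satisfies v = P v, a
   combination of the P u; each P u lies in X and is left K_j-invariant, so averaging over K_j
   fixes it and shows it is a combination of vectors invariant under both H_i and K_j. *)
lemma span_rinv_Int_span_linv:
  assumes K: "\<And>j. j \<in> J \<Longrightarrow> perm_group (K j)" "\<And>j. j \<in> J \<Longrightarrow> K j \<subseteq> Sym n"
  shows "FV.span (\<Union>i\<in>I. rinv n (H i)) \<inter> FV.span (\<Union>j\<in>J. linv n (K j))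
    \<subseteq> FV.span (\<Union>i\<in>I. \<Union>j\<in>J. rinv n (H i) \<inter> linv n (K j))"
proof -
  define X where "X = FV.span (\<Union>i\<in>I. rinv n (H i))"
  define T where "T = (\<Union>i\<in>I. \<Union>j\<in>J. rinv n (H i) \<inter> linv n (K j))"
  have generators_ltr: "ltr g ` (\<Union>i\<in>I. rinv n (H i)) \<subseteq> X" if g: "g \<in> Sym n" for g
  proof (rule image_subsetI)
    fix y assume "y \<in> (\<Union>i\<in>I. rinv n (H i))"
    then have "ltr g y \<in> (\<Union>i\<in>I. rinv n (H i))" using rinv_ltr[OF g] by blast
    then show "ltr g y \<in> X" unfolding X_def by (rule FV.span_base)
  qed
  have X_ltr: "ltr g ` X \<subseteq> X" if "g \<in> Sym n" for g
    using generators_ltr[OF that] unfolding X_def by (rule span_map[OF linear_ltr])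
  have "FV.subspace X" unfolding X_def by (rule FV.subspace_span)
  then obtain P where P: "Vector_Spaces.linear fscale fscale P" "\<And>v. P v \<in> X" "\<And>x. x \<in> X \<Longrightarrow> P x = x"
    "\<And>h v. h \<in> Sym n \<Longrightarrow> P (ltr h v) = ltr h (P v)"
    using equivariant_projection[OF perm_group_Sym finite_Sym] X_ltr by blast
  have P_linv: "P u \<in> FV.span T" if j: "j \<in> J" and u: "u \<in> linv n (K j)" for j u
  proof -
    have "ltr c (P u) = P u" if c: "c \<in> K j" for c
      using P(4)[of c u] c u K(2)[OF j] unfolding linv_def by auto
    then have "avg (K j) (P u) = P u"
      using avg_fixed finite_subset[OF K(2)[OF j] finite_Sym] perm_group_id[OF K(1)[OF j]] by blast
    moreover have "avg (K j) ` (\<Union>i\<in>I. rinv n (H i)) \<subseteq> FV.span T"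
    proof (rule image_subsetI)
      fix y assume "y \<in> (\<Union>i\<in>I. rinv n (H i))"
      then have "avg (K j) y \<in> T" using avg_rinv[OF K(1,2)[OF j]] j unfolding T_def by blast
      then show "avg (K j) y \<in> FV.span T" by (rule FV.span_base)
    qed
    then have "avg (K j) ` X \<subseteq> FV.span T" unfolding X_def by (rule span_map[OF linear_avg])
    ultimately show ?thesis using P(2)[of u] by (metis image_subset_iff)
  qed
  have "P ` (\<Union>j\<in>J. linv n (K j)) \<subseteq> FV.span T"
    using P_linv by blast
  then have "P ` FV.span (\<Union>j\<in>J. linv n (K j)) \<subseteq> FV.span T"
    by (rule span_map[OF P(1)])
  moreover have "v = P v" if "v \<in> X" for v using P(3)[OF that] by simp
  ultimately show ?thesis unfolding X_def[symmetric] T_def[symmetric] by blast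
qed

theorem span_U_Int:
  assumes R: "partition_on {1..n} R" and C: "partition_on {1..n} C"
    and Rs: "\<And>i. i \<in> I \<Longrightarrow> partition_on {1..n} (Rs i)"
    and Cs: "\<And>j. j \<in> J \<Longrightarrow> partition_on {1..n} (Cs j)"
    and R_finer: "\<And>i. i \<in> I \<Longrightarrow> finer R (Rs i)"
    and C_finer: "\<And>j. j \<in> J \<Longrightarrow> finer C (Cs j)"
  shows "FV.span (\<Union>i\<in>I. U n (Rs i, C)) \<inter> FV.span (\<Union>j\<in>J. U n (R, Cs j))
    = FV.span (\<Union>i\<in>I. \<Union>j\<in>J. U n (Rs i, Cs j))"
proof
  have "U n (Rs i, Cs j) \<subseteq> U n (Rs i, C) \<inter> U n (R, Cs j)" if i: "i \<in> I" and j: "j \<in> J" for i j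
  proof -
    have "U n (Rs i, Cs j) = linv n (stab n (Cs j)) \<inter> rinv n (stab n (Rs i))"
      by (rule U_eq_invariants[OF Rs[OF i] Cs[OF j]])
    moreover have "linv n (stab n (Cs j)) \<subseteq> linv n (stab n C)"
      by (rule linv_antimono[OF stab_finer[OF C Cs[OF j] C_finer[OF j]]])
    moreover have "rinv n (stab n (Rs i)) \<subseteq> rinv n (stab n R)"
      by (rule rinv_antimono[OF stab_finer[OF R Rs[OF i] R_finer[OF i]]])
    ultimately show ?thesis
      using U_eq_invariants[OF Rs[OF i] C] U_eq_invariants[OF R Cs[OF j]] by blast
  qed
  then show "FV.span (\<Union>i\<in>I. \<Union>j\<in>J. U n (Rs i, Cs j))
      \<subseteq> FV.span (\<Union>i\<in>I. U n (Rs i, C)) \<inter> FV.span (\<Union>j\<in>J. U n (R, Cs j))"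
    by (intro Int_greatest FV.span_mono) blast+
next
  have "FV.span (\<Union>i\<in>I. U n (Rs i, C)) \<subseteq> FV.span (\<Union>i\<in>I. rinv n (stab n (Rs i)))"
    using U_subset_invariants by (intro FV.span_mono) blast
  moreover have "FV.span (\<Union>j\<in>J. U n (R, Cs j)) \<subseteq> FV.span (\<Union>j\<in>J. linv n (stab n (Cs j)))"
    using U_subset_invariants by (intro FV.span_mono) blast
  moreover have "(\<Union>i\<in>I. \<Union>j\<in>J. rinv n (stab n (Rs i)) \<inter> linv n (stab n (Cs j)))
      = (\<Union>i\<in>I. \<Union>j\<in>J. U n (Rs i, Cs j))"
    using U_eq_invariants[OF Rs Cs] by auto
  ultimately show "FV.span (\<Union>i\<in>I. U n (Rs i, C)) \<inter> FV.span (\<Union>j\<in>J. U n (R, Cs j))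
      \<subseteq> FV.span (\<Union>i\<in>I. \<Union>j\<in>J. U n (Rs i, Cs j))"
    using span_rinv_Int_span_linv[where K="\<lambda>j. stab n (Cs j)" and H="\<lambda>i. stab n (Rs i)" and I=I and J=J]
      perm_group_stab stab_subset_Sym by fastforce
qed

lemma loglin_Int:
  assumes "fspan (\<Union>B\<in>F. U n B) \<inter> fspan (\<Union>B\<in>G. U n B) = fspan (\<Union>B\<in>H. U n B)"
  shows "loglin n F \<inter> loglin n G = loglin n H"
  using assms unfolding loglin_def by blast

theorem corollary1:
  fixes n s t :: nat
    and R C :: "nat set set"
    and Rs Cs :: "nat \<Rightarrow> nat set set"
  assumes "partition_on {1..n} R"
    and "partition_on {1..n} C"
    and "\<And>i. i \<in> {1..s} \<Longrightarrow> partition_on {1..n} (Rs i)"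
    and "\<And>j. j \<in> {1..t} \<Longrightarrow> partition_on {1..n} (Cs j)"
    and "\<And>i. i \<in> {1..s} \<Longrightarrow> finer R (Rs i)"
    and "\<And>j. j \<in> {1..t} \<Longrightarrow> finer C (Cs j)"
  shows "loglin n ((\<lambda>i. (Rs i, C)) ` {1..s}) \<inter> loglin n ((\<lambda>j. (R, Cs j)) ` {1..t})
         = loglin n ((\<lambda>(i, j). (Rs i, Cs j)) ` ({1..s} \<times> {1..t}))"
proof (rule loglin_Int)
  have "(\<Union>B\<in>(\<lambda>i. (Rs i, C)) ` {1..s}. U n B) = (\<Union>i\<in>{1..s}. U n (Rs i, C))"
    and "(\<Union>B\<in>(\<lambda>j. (R, Cs j)) ` {1..t}. U n B) = (\<Union>j\<in>{1..t}. U n (R, Cs j))"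
    by (simp_all only: image_image)
  moreover have "(\<Union>B\<in>(\<lambda>(i, j). (Rs i, Cs j)) ` ({1..s} \<times> {1..t}). U n B)
      = (\<Union>i\<in>{1..s}. \<Union>j\<in>{1..t}. U n (Rs i, Cs j))"
    by auto
  ultimately show "fspan (\<Union>B\<in>(\<lambda>i. (Rs i, C)) ` {1..s}. U n B) \<inter> fspan (\<Union>B\<in>(\<lambda>j. (R, Cs j)) ` {1..t}. U n B)
      = fspan (\<Union>B\<in>(\<lambda>(i, j). (Rs i, Cs j)) ` ({1..s} \<times> {1..t}). U n B)"
    using span_U_Int[where I="{1..s}" and J="{1..t}", OF assms] by (simp only:)
qed

end
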